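(* Let $I$ be a fuzzy implication function, $T$ a t-norm and $j\in\{1,\dots,n_c\}$. Suppose $I$ satisfies the monotonicity of the generalized modus ponens with respect to $T$, i.e. $T(\tilde x,I(\tilde x,y))\le T(x,I(x,y))$ for all $x,\tilde x,y\in[0,1]$ with $\tilde x\le x$. Then for all $R^{S,L}_j,R^{\tilde S,\tilde L}_j\in\mathcal{R}^{I,T}_j$ with $R^{S,L}_j\prec R^{\tilde S,\tilde L}_j$ and all $E^d\in E$, $$\mu_{eval}^{R^{\tilde S,\tilde L}_j,E^d}\le\mu_{eval}^{R^{S,L}_j,E^d},$$ and consequently $\sum_{d=1}^{n_e}\mu_{eval}^{R^{\tilde S,\tilde L}_j,E^d}\le\sum_{d=1}^{n_e}\mu_{eval}^{R^{S,L}_j,E^d}$.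
   Context: A fuzzy implication function is a map $I:[0,1]^2\to[0,1]$ decreasing in the first variable, increasing in the second, with $I(0,0)=I(1,1)=1$, $I(1,0)=0$. A t-norm is a commutative, associative, increasing binary operation on $[0,1]$ with neutral element $1$. Setting: features $X_1,\dots,X_{n_f}$ with domains $D_m\subseteq\mathbb{R}$, target $Y$ with domain $D_Y$; examples $E=\{E^d=(e^d_1,\dots,e^d_{n_f},y^d):d=1,\dots,n_e\}$; each feature $X_m$ has labels $LL_m^1,\dots,LL_m^{l_m}$ with membership functions $\mu_{LL_m^n}:D_m\to[0,1]$; classes $\mathrm{Class}_1,\dots,\mathrm{Class}_{n_c}$ with $\mu_{\mathrm{Class}_j}:D_Y\to[0,1]$. A rule $R^{S,L}_j$ is given by a class index $j$, a set of features $S=\{X_{m_1},\dots,X_{m_s}\}$ and a set $L$ of labels containing exactly one label $LL^{n_{m_i}}_{m_i}$ per feature in $S$. $\mathcal{R}^{I,T}_j$ is the set of such rules with class $j$, evaluated with $T$ and $I$. For an example $E^d$: $\mu_{ant}^{R^{S,L}_j,E^d}=T(\mu_{LL^{n_{m_1}}_{m_1}}(e^d_{m_1}),\dots,\mu_{LL^{n_{m_s}}_{m_s}}(e^d_{m_s}))$, $\mu_{con}^{R^{S,L}_j,E^d}=\mu_{\mathrm{Class}_j}(y^d)$, $\mu_{eval}^{R^{S,L}_j,E^d}=T\big(\mu_{ant}^{R^{S,L}_j,E^d},I(\mu_{ant}^{R^{S,L}_j,E^d},\mu_{con}^{R^{S,L}_j,E^d})\big)$. $R^{\tilde S,\tilde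 L}_{\tilde j}$ is a refinement of $R^{S,L}_j$, written $R^{S,L}_j\prec R^{\tilde S,\tilde L}_{\tilde j}$, iff $\tilde j=j$, $S\subsetneq\tilde S$, and every label of $L$ belongs to $\tilde L$. *)

theory Defs
  imports Complex_Main
begin

definition fuzzy_implication :: "(real \<Rightarrow> real \<Rightarrow> real) \<Rightarrow> bool" where
  "fuzzy_implication I \<longleftrightarrow>
     (\<forall>x y. 0 \<le> x \<and> x \<le> 1 \<and> 0 \<le> y \<and> y \<le> 1 \<longrightarrow> 0 \<le> I x y \<and> I x y \<le> 1) \<and>
     (\<forall>x1 x2 y. 0 \<le> x1 \<and> x1 \<le> x2 \<and> x2 \<le> 1 \<and> 0 \<le> y \<and> y \<le> 1 \<longrightarrow> I x2 y \<le> I x1 y) \<and>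
     (\<forall>x y1 y2. 0 \<le> x \<and> x \<le> 1 \<and> 0 \<le> y1 \<and> y1 \<le> y2 \<and> y2 \<le> 1 \<longrightarrow> I x y1 \<le> I x y2) \<and>
     I 0 0 = 1 \<and> I 1 1 = 1 \<and> I 1 0 = 0"

definition tnorm :: "(real \<Rightarrow> real \<Rightarrow> real) \<Rightarrow> bool" where
  "tnorm T \<longleftrightarrow>
     (\<forall>x y. 0 \<le> x \<and> x \<le> 1 \<and> 0 \<le> y \<and> y \<le> 1 \<longrightarrow> 0 \<le> T x y \<and> T x y \<le> 1) \<and>
     (\<forall>x y. 0 \<le> x \<and> x \<le> 1 \<and> 0 \<le> y \<and> y \<le> 1 \<longrightarrow> T x y = T y x) \<and>
     (\<forall>x y z. 0 \<le> x \<and> x \<le> 1 \<and> 0 \<le> y \<and> y \<le> 1 \<and> 0 \<le> z \<and> z \<le> 1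
        \<longrightarrow> T x (T y z) = T (T x y) z) \<and>
     (\<forall>x1 x2 y1 y2. 0 \<le> x1 \<and> x1 \<le> x2 \<and> x2 \<le> 1 \<and> 0 \<le> y1 \<and> y1 \<le> y2 \<and> y2 \<le> 1
        \<longrightarrow> T x1 y1 \<le> T x2 y2) \<and>
     (\<forall>x. 0 \<le> x \<and> x \<le> 1 \<longrightarrow> T x 1 = x)"

definition mono_GMP :: "(real \<Rightarrow> real \<Rightarrow> real) \<Rightarrow> (real \<Rightarrow> real \<Rightarrow> real) \<Rightarrow> bool" where
  "mono_GMP I T \<longleftrightarrow> (\<forall>x xt y. 0 \<le> xt \<and> xt \<le> x \<and> x \<le> 1 \<and> 0 \<le> y \<and> y \<le> 1
       \<longrightarrow> T xt (I xt y) \<le> T x (I x y))"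

text \<open>A rule with class index j, feature set S (feature indices in 1..nf) and a set L of
  labels, each label given as a pair (m, n) meaning LL_m^n; exactly one label per feature in S.\<close>
definition is_rule :: "nat \<Rightarrow> (nat \<Rightarrow> nat) \<Rightarrow> nat \<Rightarrow> nat \<Rightarrow> nat set \<Rightarrow> (nat \<times> nat) set \<Rightarrow> bool" where
  "is_rule nf l nc j S L \<longleftrightarrow> j \<in> {1..nc} \<and> S \<subseteq> {1..nf} \<and> L \<subseteq> S \<times> UNIV \<and>
     (\<forall>m\<in>S. \<exists>!n. (m, n) \<in> L) \<and> (\<forall>(m, n)\<in>L. n \<in> {1..l m})"

definition refines :: "nat \<Rightarrow> nat set \<Rightarrow> (nat \<times> nat) set \<Rightarrow> nat \<Rightarrow> nat set \<Rightarrow> (nat \<times> nat) set \<Rightarrow> bool" where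
  "refines j S L jt St Lt \<longleftrightarrow> jt = j \<and> S \<subset> St \<and> L \<subseteq> Lt"

definition rule_label :: "(nat \<times> nat) set \<Rightarrow> nat \<Rightarrow> nat" where
  "rule_label L m = (THE n. (m, n) \<in> L)"

definition mu_ant :: "(real \<Rightarrow> real \<Rightarrow> real) \<Rightarrow> (nat \<Rightarrow> nat \<Rightarrow> real \<Rightarrow> real)
     \<Rightarrow> nat set \<Rightarrow> (nat \<times> nat) set \<Rightarrow> (nat \<Rightarrow> real) \<Rightarrow> real" where
  "mu_ant T mu S L x = foldr T (map (\<lambda>m. mu m (rule_label L m) (x m)) (sorted_list_of_set S)) 1"

definition mu_eval :: "(real \<Rightarrow> real \<Rightarrow> real) \<Rightarrow> (real \<Rightarrow> real \<Rightarrow> real) \<Rightarrow> (nat \<Rightarrow> nat \<Rightarrow> real \<Rightarrow> real)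
     \<Rightarrow> (nat \<Rightarrow> 'y \<Rightarrow> real) \<Rightarrow> nat \<Rightarrow> nat set \<Rightarrow> (nat \<times> nat) set \<Rightarrow> (nat \<Rightarrow> real) \<Rightarrow> 'y \<Rightarrow> real" where
  "mu_eval T I mu muC j S L x yv =
     (let a = mu_ant T mu S L x in T a (I a (muC j yv)))"

end

theory Submission
  imports Defs "HOL-Library.Multiset"
begin

text \<open>Since a t-norm is commutative, associative and monotone on [0,1], the antecedent degree of a
  rule is the t-norm of its label memberships in any order; the refined rule keeps every label of
  the coarser one and adds further factors in [0,1], each of which can only lower the value.
  Monotonicity of the generalized modus ponens turns this smaller antecedent degree into a smaller
  evaluation, and summing over the examples gives the second claim.\<close>

lemma tnorm_in_unit: "tnorm T \<Longrightarrow> x \<in> {0..1} \<Longrightarrow> y \<in> {0..1} \<Longrightarrow> T x y \<in> {0..1}"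
  unfolding tnorm_def atLeastAtMost_iff by blast

lemma tnorm_commute: "tnorm T \<Longrightarrow> x \<in> {0..1} \<Longrightarrow> y \<in> {0..1} \<Longrightarrow> T x y = T y x"
  unfolding tnorm_def atLeastAtMost_iff by blast

lemma tnorm_assoc:
  "tnorm T \<Longrightarrow> x \<in> {0..1} \<Longrightarrow> y \<in> {0..1} \<Longrightarrow> z \<in> {0..1} \<Longrightarrow> T x (T y z) = T (T x y) z"
  unfolding tnorm_def atLeastAtMost_iff by blast

lemma tnorm_mono:
  "tnorm T \<Longrightarrow> 0 \<le> x1 \<Longrightarrow> x1 \<le> x2 \<Longrightarrow> x2 \<le> 1 \<Longrightarrow> 0 \<le> y1 \<Longrightarrow> y1 \<le> y2 \<Longrightarrow> y2 \<le> 1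
    \<Longrightarrow> T x1 y1 \<le> T x2 y2"
  unfolding tnorm_def by blast

lemma tnorm_foldr_in_unit:
  assumes "tnorm T" "set xs \<subseteq> {0..1}" "b \<in> {0..1}"
  shows "foldr T xs b \<in> {0..1}"
  using assms(2) by (induction xs) (simp_all add: assms(3) tnorm_in_unit[OF assms(1)] del: atLeastAtMost_iff)

lemma tnorm_foldr_mono:
  assumes T: "tnorm T" and xs: "set xs \<subseteq> {0..1}" and "0 \<le> b" "b \<le> b'" "b' \<le> 1"
  shows "foldr T xs b \<le> foldr T xs b'"
  using xs
proof (induction xs)
  case (Cons x xs)
  have "foldr T xs b \<in> {0..1}" "foldr T xs b' \<in> {0..1}"
    using Cons.prems assms(3-5) tnorm_foldr_in_unit[OF T] by auto
  with Cons show ?case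
    by (simp add: tnorm_mono[OF T])
qed (simp add: assms(4))

lemma tnorm_foldr_remove1:
  assumes T: "tnorm T" and xs: "set xs \<subseteq> {0..1}" and b: "b \<in> {0..1}" and a: "a \<in> set xs"
  shows "foldr T xs b = T a (foldr T (remove1 a xs) b)"
  using xs a
proof (induction xs)
  case (Cons x xs)
  show ?case
  proof (cases "x = a")
    case False
    let ?r = "foldr T (remove1 a xs) b"
    have in_unit: "a \<in> {0..1}" "x \<in> {0..1}" "?r \<in> {0..1}"
      using Cons.prems b tnorm_foldr_in_unit[OF T, of "remove1 a xs" b] set_remove1_subset[of a xs]
      by auto
    have "foldr T (x # xs) b = T x (T a ?r)"
      using Cons False by simp
    also have "\<dots> = T (T x a) ?r"
      using in_unit by (simp add: tnorm_assoc[OF T])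
    also have "\<dots> = T a (T x ?r)"
      using in_unit by (simp add: tnorm_assoc[OF T] tnorm_commute[OF T, of x a])
    finally show ?thesis
      using False by simp
  qed simp
qed simp

lemma tnorm_foldr_perm:
  assumes T: "tnorm T" and "set xs \<subseteq> {0..1}" "b \<in> {0..1}" "mset xs = mset ys"
  shows "foldr T xs b = foldr T ys b"
  using assms(2-)
proof (induction xs arbitrary: ys)
  case (Cons x xs)
  have "set ys = set (x # xs)"
    using Cons.prems(3) by (metis mset_eq_setD)
  then have "x \<in> set ys" "set ys \<subseteq> {0..1}"
    using Cons.prems(1) by auto
  then have "foldr T ys b = T x (foldr T (remove1 x ys) b)"
    using Cons.prems(2) by (intro tnorm_foldr_remove1[OF T]) auto
  moreover have "foldr T xs b = foldr T (remove1 x ys) b"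
    using Cons.prems by (intro Cons.IH) (auto simp flip: Cons.prems(3))
  ultimately show ?case
    by simp
qed simp

lemma tnorm_foldr_superset_le:
  assumes T: "tnorm T" and "finite B" "A \<subseteq> B" "f ` B \<subseteq> {0..1}"
  shows "foldr T (map f (sorted_list_of_set B)) 1 \<le> foldr T (map f (sorted_list_of_set A)) 1"
proof -
  have fin: "finite A" "finite (B - A)"
    using assms(2,3) by (auto intro: finite_subset)
  let ?as = "map f (sorted_list_of_set A)" and ?rest = "map f (sorted_list_of_set (B - A))"
  have "mset (sorted_list_of_set B) = mset (sorted_list_of_set A @ sorted_list_of_set (B - A))"
    using fin assms(2,3) mset_set_Union[of A "B - A"]
    by (simp add: Un_absorb1 flip: sorted_list_of_mset_set)
  then have "mset (map f (sorted_list_of_set B)) = mset (?as @ ?rest)"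
    by (metis map_append mset_map)
  then have "foldr T (map f (sorted_list_of_set B)) 1 = foldr T (?as @ ?rest) 1"
    using assms fin by (intro tnorm_foldr_perm[OF T]) auto
  also have "\<dots> = foldr T ?as (foldr T ?rest 1)"
    by simp
  also have "\<dots> \<le> foldr T ?as 1"
    using assms fin tnorm_foldr_in_unit[OF T, of ?rest 1]
    by (intro tnorm_foldr_mono[OF T]) auto
  finally show ?thesis .
qed

lemma rule_label_eqI: "\<exists>!n. (m, n) \<in> L \<Longrightarrow> (m, n) \<in> L \<Longrightarrow> rule_label L m = n"
  unfolding rule_label_def by (rule the1_equality)

lemma is_rule_label:
  assumes "is_rule nf l nc j S L" "m \<in> S"
  shows "(m, rule_label L m) \<in> L" "m \<in> {1..nf}" "rule_label L m \<in> {1..l m}"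
proof -
  have "\<exists>!n. (m, n) \<in> L"
    using assms unfolding is_rule_def by blast
  then show label: "(m, rule_label L m) \<in> L"
    unfolding rule_label_def by (rule theI')
  show "m \<in> {1..nf}" "rule_label L m \<in> {1..l m}"
    using assms label unfolding is_rule_def by auto
qed

lemma refines_rule_label:
  assumes "is_rule nf l nc j S L" "is_rule nf l nc j St Lt" "refines j S L j St Lt" "m \<in> S"
  shows "rule_label Lt m = rule_label L m"
proof (rule rule_label_eqI)
  have "m \<in> St"
    using assms(3,4) unfolding refines_def by blast
  then show "\<exists>!n. (m, n) \<in> Lt"
    using assms(2) unfolding is_rule_def by blast
  show "(m, rule_label L m) \<in> Lt"
    using is_rule_label(1)[OF assms(1,4)] assms(3) unfolding refines_def by blast
qed

lemma mu_ant_in_unit: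
  assumes T: "tnorm T" and R: "is_rule nf l nc j S L"
    and mu: "\<And>m n. m \<in> {1..nf} \<Longrightarrow> n \<in> {1..l m} \<Longrightarrow> mu m n (x m) \<in> {0..1}"
  shows "mu_ant T mu S L x \<in> {0..1}"
proof -
  have "finite S"
    using R unfolding is_rule_def by (auto intro: finite_subset)
  then show ?thesis
    unfolding mu_ant_def using is_rule_label[OF R] mu
    by (intro tnorm_foldr_in_unit[OF T]) auto
qed

lemma mu_ant_refines_le:
  assumes T: "tnorm T" and R: "is_rule nf l nc j S L" and Rt: "is_rule nf l nc j St Lt"
    and ref: "refines j S L j St Lt"
    and mu: "\<And>m n. m \<in> {1..nf} \<Longrightarrow> n \<in> {1..l m} \<Longrightarrow> mu m n (x m) \<in> {0..1}"
  shows "mu_ant T mu St Lt x \<le> mu_ant T mu S L x"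
proof -
  define f where "f m = mu m (rule_label Lt m) (x m)" for m
  have fin: "finite St" "finite S" and sub: "S \<subseteq> St"
    using R Rt ref unfolding is_rule_def refines_def by (auto intro: finite_subset)
  have "mu_ant T mu S L x = foldr T (map f (sorted_list_of_set S)) 1"
    unfolding mu_ant_def f_def using fin refines_rule_label[OF R Rt ref]
    by (intro arg_cong2[where f = "foldr T"] map_cong) auto
  moreover have "mu_ant T mu St Lt x = foldr T (map f (sorted_list_of_set St)) 1"
    unfolding mu_ant_def f_def ..
  moreover have "f ` St \<subseteq> {0..1}"
    unfolding f_def using is_rule_label[OF Rt] mu by blast
  ultimately show ?thesis
    using tnorm_foldr_superset_le[OF T fin(1) sub] by simp
qed

lemma mu_eval_refines_le:
  assumes T: "tnorm T" and GMP: "mono_GMP I T"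
    and R: "is_rule nf l nc j S L" and Rt: "is_rule nf l nc j St Lt"
    and ref: "refines j S L j St Lt"
    and mu: "\<And>m n. m \<in> {1..nf} \<Longrightarrow> n \<in> {1..l m} \<Longrightarrow> mu m n (x m) \<in> {0..1}"
    and muC: "muC j yv \<in> {0..1}"
  shows "mu_eval T I mu muC j St Lt x yv \<le> mu_eval T I mu muC j S L x yv"
proof -
  have "mu_ant T mu St Lt x \<le> mu_ant T mu S L x"
    using T R Rt ref mu by (rule mu_ant_refines_le)
  moreover have "mu_ant T mu St Lt x \<in> {0..1}" "mu_ant T mu S L x \<in> {0..1}"
    using T Rt R mu by (blast intro: mu_ant_in_unit)+
  ultimately show ?thesis
    using muC GMP unfolding mu_eval_def mono_GMP_def Let_def by simp
qed

theorem proposition4: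
  fixes I T :: "real \<Rightarrow> real \<Rightarrow> real"
    and nf nc ne :: nat and l :: "nat \<Rightarrow> nat"
    and D :: "nat \<Rightarrow> real set" and DY :: "'y set"
    and mu :: "nat \<Rightarrow> nat \<Rightarrow> real \<Rightarrow> real" and muC :: "nat \<Rightarrow> 'y \<Rightarrow> real"
    and e :: "nat \<Rightarrow> nat \<Rightarrow> real" and y :: "nat \<Rightarrow> 'y"
    and j :: nat and S St :: "nat set" and L Lt :: "(nat \<times> nat) set"
  assumes I: "fuzzy_implication I"
    and T: "tnorm T"
    and GMP: "mono_GMP I T"
    and j: "j \<in> {1..nc}"
    and mu_range: "\<And>m n v. m \<in> {1..nf} \<Longrightarrow> n \<in> {1..l m} \<Longrightarrow> v \<in> D m \<Longrightarrow> 0 \<le> mu m n v \<and> mu m n v \<le> 1"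
    and muC_range: "\<And>k v. k \<in> {1..nc} \<Longrightarrow> v \<in> DY \<Longrightarrow> 0 \<le> muC k v \<and> muC k v \<le> 1"
    and e_dom: "\<And>d m. d \<in> {1..ne} \<Longrightarrow> m \<in> {1..nf} \<Longrightarrow> e d m \<in> D m"
    and y_dom: "\<And>d. d \<in> {1..ne} \<Longrightarrow> y d \<in> DY"
    and R: "is_rule nf l nc j S L"
    and Rt: "is_rule nf l nc j St Lt"
    and ref: "refines j S L j St Lt"
  shows "(\<forall>d\<in>{1..ne}. mu_eval T I mu muC j St Lt (e d) (y d) \<le> mu_eval T I mu muC j S L (e d) (y d))
       \<and> (\<Sum>d=1..ne. mu_eval T I mu muC j St Lt (e d) (y d)) \<le> (\<Sum>d=1..ne. mu_eval T I mu muC j S L (e d) (y d))"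
proof -
  have pointwise: "mu_eval T I mu muC j St Lt (e d) (y d) \<le> mu_eval T I mu muC j S L (e d) (y d)"
    if d: "d \<in> {1..ne}" for d
  proof (rule mu_eval_refines_le[OF T GMP R Rt ref])
    show "mu m n (e d m) \<in> {0..1}" if "m \<in> {1..nf}" "n \<in> {1..l m}" for m n
      using mu_range[OF that e_dom[OF d that(1)]] by simp
    show "muC j (y d) \<in> {0..1}"
      using muC_range[OF j y_dom[OF d]] by simp
  qed
  then show ?thesis
    by (auto intro: sum_mono)
qed

end
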